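(* Let $X$ be a Fréchet space and $(\|\cdot\|_k)_{k\ge 1}$ an associated increasing family of seminorms (i.e. $\|x\|_k\le\|x\|_{k+1}$ for all $x\in X$, $k\ge1$). Equip $X$ with the metric \[ d_X(x,y)=\sum_{k=1}^{\infty}2^{-k}\min\bigl(1,\|x-y\|_k\bigr). \] A linear operator $T:X\to X$ is an isometry for $d_X$ (i.e. $d_X(Tx,Ty)=d_X(x,y)$ for all $x,y\in X$) if and only if $\|Tx\|_k=\|x\|_k$ for all $x\in X$ and all $k\in\mathbb{N}$. *)

theory Defs
  imports "HOL-Analysis.Analysis"
begin

definition seminorm :: "('a::real_vector \<Rightarrow> real) \<Rightarrow> bool" where
  "seminorm q \<longleftrightarrow> (\<forall>x y. q (x + y) \<le> q x + q y) \<and> (\<forall>c x. q (c *\<^sub>R x) = \<bar>c\<bar> * q x)"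

text \<open>The metric d_X associated with the seminorm family; index k (from 0) here
  corresponds to the paper's seminorm number k+1, weight 2^-(k+1).\<close>
definition frechet_dist :: "(nat \<Rightarrow> 'a::real_vector \<Rightarrow> real) \<Rightarrow> 'a \<Rightarrow> 'a \<Rightarrow> real" where
  "frechet_dist p x y = (\<Sum>k. (1/2) ^ Suc k * min 1 (p k (x - y)))"

definition frechet_seminorms :: "(nat \<Rightarrow> 'a::real_vector \<Rightarrow> real) \<Rightarrow> bool" where
  "frechet_seminorms p \<longleftrightarrow>
     (\<forall>k. seminorm (p k)) \<and>
     (\<forall>k x. p k x \<le> p (Suc k) x) \<and>
     (\<forall>x. (\<forall>k. p k x = 0) \<longrightarrow> x = 0) \<and>
     (\<forall>f :: nat \<Rightarrow> 'a.
        (\<forall>e>0. \<exists>N. \<forall>m\<ge>N. \<forall>n\<ge>N. frechet_dist p (f m) (f n) < e) \<longrightarrow>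
        (\<exists>x. (\<lambda>n. frechet_dist p (f n) x) \<longlonglongrightarrow> 0))"

end

theory Submission
  imports Defs
begin

text \<open>An isometry of the translation-invariant metric preserves the distance to 0 of every
  multiple \<open>c *\<^sub>R x\<close>. If \<open>p k (T x) \<noteq> p k x\<close> for some \<open>k\<close>, take \<open>k\<close> least and rescale the
  larger of the two vectors to have \<open>k\<close>-th seminorm 1: below \<open>k\<close> the summands of the two
  distances agree, at \<open>k\<close> they differ, and above \<open>k\<close> the larger vector's summands are
  saturated at 1 because the seminorms increase. So one distance is strictly smaller.\<close>

lemma suminf_strict_mono:
  fixes f g :: "nat \<Rightarrow> real"
  assumes "summable f" "summable g" "\<And>n. f n \<le> g n" "f k < g k"
  shows "suminf f < suminf g"
proof -
  have "0 < (\<Sum>n. g n - f n)"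
    using assms by (subst suminf_pos_iff) (auto intro: summable_diff)
  with assms(1,2) show ?thesis
    by (simp add: suminf_diff[symmetric])
qed

lemma seminorm_scaleR:
  assumes "seminorm q"
  shows "q (c *\<^sub>R x) = \<bar>c\<bar> * q x"
  using assms unfolding seminorm_def by blast

lemma seminorm_nonneg:
  assumes "seminorm q"
  shows "0 \<le> q x"
proof -
  have "q 0 \<le> q x + q (- x)"
    using assms unfolding seminorm_def by (metis add.right_inverse)
  moreover have "q 0 = 0" and "q (- x) = q x"
    using seminorm_scaleR[OF assms, of 0 x] seminorm_scaleR[OF assms, of "-1" x] by simp_all
  ultimately show ?thesis by simp
qed

lemma summable_frechet_dist_terms:
  fixes a :: "nat \<Rightarrow> real"
  assumes "\<And>k. 0 \<le> min 1 (a k)"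
  shows "summable (\<lambda>k. (1/2) ^ Suc k * min 1 (a k))"
proof (rule summable_comparison_test)
  show "\<exists>N. \<forall>k\<ge>N. norm ((1/2::real) ^ Suc k * min 1 (a k)) \<le> (1/2) ^ Suc k"
    using assms by (auto simp: abs_mult intro: mult_left_le)
qed simp

lemma frechet_dist_0_strict_mono:
  assumes "\<And>j. 0 \<le> p j u"
    and "\<And>j. min 1 (p j u) \<le> min 1 (p j v)"
    and "min 1 (p k u) < min 1 (p k v)"
  shows "frechet_dist p u 0 < frechet_dist p v 0"
  unfolding frechet_dist_def diff_zero
proof (intro suminf_strict_mono summable_frechet_dist_terms)
  show "0 \<le> min 1 (p j u)" "0 \<le> min 1 (p j v)" for j
    using assms(1,2)[of j] by linarith+
  show "(1/2) ^ Suc j * min 1 (p j u) \<le> (1/2) ^ Suc j * min 1 (p j v)" for j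
    using assms(2)[of j] by (simp add: mult_left_mono)
  show "(1/2) ^ Suc k * min 1 (p k u) < (1/2) ^ Suc k * min 1 (p k v)"
    using assms(3) by simp
qed

lemma frechet_dist_scaleR_less:
  fixes p :: "nat \<Rightarrow> 'a::real_vector \<Rightarrow> real"
  assumes seminorms: "\<And>j. seminorm (p j)" and incr: "\<And>j x. p j x \<le> p (Suc j) x"
    and below: "\<And>j. j < k \<Longrightarrow> p j u = p j v" and at: "p k u < p k v"
  shows "frechet_dist p ((1 / p k v) *\<^sub>R u) 0 < frechet_dist p ((1 / p k v) *\<^sub>R v) 0"
proof (rule frechet_dist_0_strict_mono)
  have pos: "0 < p k v"
    using at seminorm_nonneg[OF seminorms, of k u] by linarith
  have scaled: "p j ((1 / p k v) *\<^sub>R x) = p j x / p k v" for j x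
    using seminorm_scaleR[OF seminorms] pos by simp
  show "0 \<le> p j ((1 / p k v) *\<^sub>R u)" for j
    using seminorm_nonneg[OF seminorms] by blast
  show "min 1 (p k ((1 / p k v) *\<^sub>R u)) < min 1 (p k ((1 / p k v) *\<^sub>R v))"
    using at pos by (simp add: scaled)
  show "min 1 (p j ((1 / p k v) *\<^sub>R u)) \<le> min 1 (p j ((1 / p k v) *\<^sub>R v))" for j
  proof (cases "j < k")
    case True
    then show ?thesis by (simp add: scaled below)
  next
    case False
    then have "p k v \<le> p j v"
      using lift_Suc_mono_le[of "\<lambda>j. p j v", OF incr] by simp
    then have "min 1 (p j ((1 / p k v) *\<^sub>R v)) = 1"
      using pos by (simp add: scaled)
    then show ?thesis by linarith
  qed
qed

lemma seminorms_eq_if_frechet_dist_scaleR_eq: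
  fixes p :: "nat \<Rightarrow> 'a::real_vector \<Rightarrow> real"
  assumes seminorms: "\<And>j. seminorm (p j)" and incr: "\<And>j x. p j x \<le> p (Suc j) x"
    and dist_eq: "\<And>c. frechet_dist p (c *\<^sub>R u) 0 = frechet_dist p (c *\<^sub>R v) 0"
  shows "p k u = p k v"
proof (rule ccontr)
  assume "p k u \<noteq> p k v"
  define m where "m = (LEAST j. p j u \<noteq> p j v)"
  have differ: "p m u \<noteq> p m v"
    unfolding m_def by (rule LeastI) fact
  have below: "p j u = p j v" if "j < m" for j
    using not_less_Least[of j "\<lambda>j. p j u \<noteq> p j v"] that unfolding m_def by blast
  from differ consider "p m u < p m v" | "p m v < p m u"
    by linarith
  then show False
  proof cases
    case 1
    with frechet_dist_scaleR_less[of p, OF seminorms incr below] show False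
      by (simp add: dist_eq)
  next
    case 2
    with frechet_dist_scaleR_less[of p, OF seminorms incr below[symmetric]] show False
      by (simp add: dist_eq)
  qed
qed

theorem lemma1p1:
  fixes p :: "nat \<Rightarrow> 'a::real_vector \<Rightarrow> real" and T :: "'a \<Rightarrow> 'a"
  assumes "frechet_seminorms p"
    and "linear T"
  shows "(\<forall>x y. frechet_dist p (T x) (T y) = frechet_dist p x y)
         \<longleftrightarrow> (\<forall>x k. p k (T x) = p k x)"
proof
  have seminorms: "\<And>j. seminorm (p j)" and incr: "\<And>j x. p j x \<le> p (Suc j) x"
    using assms(1) unfolding frechet_seminorms_def by auto
  assume iso: "\<forall>x y. frechet_dist p (T x) (T y) = frechet_dist p x y"
  have "frechet_dist p (c *\<^sub>R T x) 0 = frechet_dist p (c *\<^sub>R x) 0" for c x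
    using iso[rule_format, of "c *\<^sub>R x" 0] assms(2) by (simp add: linear_0 linear_scale)
  then show "\<forall>x k. p k (T x) = p k x"
    by (intro allI seminorms_eq_if_frechet_dist_scaleR_eq[of p, OF seminorms incr])
next
  assume "\<forall>x k. p k (T x) = p k x"
  then show "\<forall>x y. frechet_dist p (T x) (T y) = frechet_dist p x y"
    by (simp add: frechet_dist_def linear_diff[OF assms(2), symmetric])
qed

end
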